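(* With $w=\sqrt{(u+1)^2-4}$, $$\sum_{n\ge0}\Bigl(\sum_{\sigma\in\mathfrak S_{n+1}}u^{{\rm rda}(\sigma)}\alpha^{{\rm LRmin}(\sigma)-1}\beta^{{\rm RLmin}(\sigma)-1}\Bigr)\frac{t^n}{n!}=e^{\frac{(\beta-\alpha)(u-1)}{2}t}\left(\frac{w}{w\cosh\bigl(\frac{wt}{2}\bigr)-(1+u)\sinh\bigl(\frac{wt}{2}\bigr)}\right)^{\alpha+\beta}.$$
   Context: For $\sigma=\sigma_1\cdots\sigma_m\in\mathfrak S_m$: ${\rm rda}(\sigma)$ is the number of $i$ with $1<i\le m$ and $\sigma_{i-1}<\sigma_i<\sigma_{i+1}$ (convention $\sigma_{m+1}=+\infty$); ${\rm LRmin}(\sigma)$ is the number of $i$ with $\sigma_j>\sigma_i$ for all $j<i$; ${\rm RLmin}(\sigma)$ is the number of $i$ with $\sigma_j>\sigma_i$ for all $j>i$. Identity of formal power series in $t$; the bracketed base has constant term $1$, only even powers of $w$ occur, and $G^c:=\exp(c\log G)$. *)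

theory Defs
  imports "HOL-Computational_Algebra.Formal_Power_Series" "HOL-Combinatorics.Multiset_Permutations"
begin

(* Permutations of {1..m} are lists s = [s!0, ..., s!(m-1)]; position i (1-based) is s!(i-1). *)

(* rda: number of i with 1 < i <= m and s_{i-1} < s_i < s_{i+1}, convention s_{m+1} = +infinity *)
definition rda :: "nat list \<Rightarrow> nat" where
  "rda s = card {i. 1 \<le> i \<and> i < length s \<and> s ! (i - 1) < s ! i \<and>
                     (i + 1 = length s \<or> s ! i < s ! (i + 1))}"

definition LRmin :: "nat list \<Rightarrow> nat" where
  "LRmin s = card {i. i < length s \<and> (\<forall>j<i. s ! j > s ! i)}"

definition RLmin :: "nat list \<Rightarrow> nat" where
  "RLmin s = card {i. i < length s \<and> (\<forall>j. i < j \<and> j < length s \<longrightarrow> s ! j > s ! i)}"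

(* G^c := exp(c log G) for a formal power series G with constant term 1 *)
definition fps_powr :: "'a::field_char_0 fps \<Rightarrow> 'a \<Rightarrow> 'a fps" where
  "fps_powr G c = fps_exp 1 oo (fps_const c * (fps_ln 1 oo (G - 1)))"

(* cosh(w t/2), written with only even powers of w, where W2 = w^2 *)
definition cosh_half :: "'a::field_char_0 \<Rightarrow> 'a fps" where
  "cosh_half W2 = Abs_fps (\<lambda>n. if even n then W2 ^ (n div 2) / (2 ^ n * fact n) else 0)"

(* sinh(w t/2) / w, written with only even powers of w, where W2 = w^2 *)
definition sinh_half_div :: "'a::field_char_0 \<Rightarrow> 'a fps" where
  "sinh_half_div W2 = Abs_fps (\<lambda>n. if odd n then W2 ^ (n div 2) / (2 ^ n * fact n) else 0)"

end

theory Submission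
  imports Defs
begin

text \<open>
  Cut a permutation at its minimum: apart from the minimum itself, its left-to-right minima are
  those of the left segment and its right-to-left minima those of the right segment, and rda
  splits additively once one records how the ends of a segment behave. Cutting segments again at their minima gives
  exponential generating functions \<open>P\<close>, \<open>Q\<close> and \<open>S\<close> (for blocks
  flanked by smaller letters) with \<open>P' = \<alpha> P S\<close>, \<open>Q' = \<beta> (S + u - 1) Q\<close> and the
  Riccati equation \<open>S' = S\<^sup>2 + (u - 1) S + 1 - u\<close>. The latter is linearised by
  \<open>S = -(D' + (u - 1) D / 2) / D\<close>, where \<open>D\<close> is the reciprocal of the bracketed base and
  satisfies \<open>D'' = (w/2)\<^sup>2 D\<close>. The left-hand side \<open>P Q\<close> and the right-hand side
  then solve the same linear differential equation with constant term 1.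
\<close>

text \<open>
  \<open>double_ascents l r xs\<close> counts the positions of \<open>xs\<close> with a smaller left and a larger
  right neighbour; the flags \<open>l\<close> and \<open>r\<close> decide whether the missing neighbour at the
  left, resp. right, end satisfies this.
\<close>

fun double_ascents :: "bool \<Rightarrow> bool \<Rightarrow> nat list \<Rightarrow> nat" where
  "double_ascents l r [] = 0"
| "double_ascents l r [x] = (if l \<and> r then 1 else 0)"
| "double_ascents l r (x # y # zs) = (if l \<and> x < y then 1 else 0) + double_ascents (x < y) r (y # zs)"

definition double_ascent_set :: "bool \<Rightarrow> bool \<Rightarrow> nat list \<Rightarrow> nat set" where
  "double_ascent_set l r xs = {i. i < length xs \<and> (if i = 0 then l else xs ! (i - 1) < xs ! i)
      \<and> (if Suc i = length xs then r else xs ! i < xs ! Suc i)}"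

lemma double_ascent_set_Cons_Cons:
  "double_ascent_set l r (x # y # zs) =
     (if l \<and> x < y then {0} else {}) \<union> Suc ` double_ascent_set (x < y) r (y # zs)"
proof -
  have "i \<in> double_ascent_set l r (x # y # zs) \<longleftrightarrow>
        i \<in> (if l \<and> x < y then {0} else {}) \<union> Suc ` double_ascent_set (x < y) r (y # zs)" for i
    by (cases i; cases "i - 1") (auto simp: double_ascent_set_def image_iff)
  then show ?thesis by blast
qed

lemma card_double_ascent_set: "card (double_ascent_set l r xs) = double_ascents l r xs"
proof (induction l r xs rule: double_ascents.induct)
  case (1 l r)
  then show ?case by (simp add: double_ascent_set_def)
next
  case (2 l r x)
  have "double_ascent_set l r [x] = (if l \<and> r then {0} else {})"
    by (auto simp: double_ascent_set_def)
  then show ?case by simp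
next
  case (3 l r x y zs)
  have "finite (double_ascent_set l' r' xs)" for l' r' xs
    by (simp add: double_ascent_set_def)
  then show ?case
    using 3 by (simp add: double_ascent_set_Cons_Cons card_Un_disjoint card_image)
qed

lemma rda_eq_double_ascents: "rda s = double_ascents False True s"
proof -
  have "{i. 1 \<le> i \<and> i < length s \<and> s ! (i - 1) < s ! i \<and> (i + 1 = length s \<or> s ! i < s ! (i + 1))}
        = double_ascent_set False True s"
    by (auto simp: double_ascent_set_def)
  then show ?thesis by (simp add: rda_def card_double_ascent_set)
qed

lemma double_ascents_append_min:
  assumes "\<forall>z\<in>set L \<union> set R. m < z"
  shows "double_ascents l r (L @ m # R) =
         double_ascents l False L + (if L = [] \<and> l \<and> (R \<noteq> [] \<or> r) then 1 else 0) + double_ascents True r R"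
  using assms by (induction l False L rule: double_ascents.induct) (cases R; auto)+

lemma double_ascents_map:
  assumes "strict_mono_on (set xs) g"
  shows "double_ascents l r (map g xs) = double_ascents l r xs"
  using assms
proof (induction l r xs rule: double_ascents.induct)
  case (3 l r x y zs)
  then have "strict_mono_on (set (y # zs)) g"
    by (auto intro: monotone_on_subset)
  with 3 show ?case by (simp add: strict_mono_on_less)
qed simp_all

lemma LRmin_append_min:
  assumes "\<forall>z\<in>set L \<union> set R. m < z"
  shows "LRmin (L @ m # R) = Suc (LRmin L)"
proof -
  let ?s = "L @ m # R"
  have "(i < length ?s \<and> (\<forall>j<i. ?s ! j > ?s ! i)) \<longleftrightarrow>
        i = length L \<or> (i < length L \<and> (\<forall>j<i. L ! j > L ! i))" for i
  proof (cases "length L < i")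
    case True
    have "?s ! length L < ?s ! i" if "i < length ?s"
    proof -
      have "?s ! i \<in> set R"
        using True that by (auto simp: nth_append nth_Cons' intro!: nth_mem)
      then show ?thesis
        using assms by simp
    qed
    then show ?thesis
      using True less_asym by blast
  next
    case False
    then show ?thesis
      using assms by (auto simp: nth_append linorder_not_less le_less)
  qed
  then have "{i. i < length ?s \<and> (\<forall>j<i. ?s ! j > ?s ! i)} =
             insert (length L) {i. i < length L \<and> (\<forall>j<i. L ! j > L ! i)}"
    by blast
  then show ?thesis by (simp add: LRmin_def)
qed

lemma LRmin_map:
  assumes "strict_mono_on (set xs) g"
  shows "LRmin (map g xs) = LRmin xs"
proof -
  have "map g xs ! j > map g xs ! i \<longleftrightarrow> xs ! j > xs ! i" if "i < length xs" "j < length xs" for i j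
    using that strict_mono_on_less[OF assms] by simp
  then show ?thesis
    unfolding LRmin_def by (metis (lifting) Collect_cong length_map order.strict_trans)
qed

lemma card_reflect_lessThan:
  "card {i. i < n \<and> P (n - Suc i)} = card {i. i < n \<and> P i}"
proof -
  have "bij_betw (\<lambda>i. n - Suc i) {i. i < n \<and> P (n - Suc i)} {i. i < n \<and> P i}"
    by (rule bij_betw_byWitness[where f' = "\<lambda>i. n - Suc i"]) auto
  then show ?thesis by (rule bij_betw_same_card)
qed

lemma RLmin_eq_LRmin_rev: "RLmin s = LRmin (rev s)"
proof -
  let ?n = "length s"
  have "(\<forall>j<i. rev s ! j > rev s ! i) \<longleftrightarrow>
        (\<forall>j. ?n - Suc i < j \<and> j < ?n \<longrightarrow> s ! j > s ! (?n - Suc i))" if "i < ?n" for i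
  proof -
    have "(\<forall>j<i. rev s ! j > rev s ! i) \<longleftrightarrow> (\<forall>j<i. s ! (?n - Suc j) > s ! (?n - Suc i))"
      using that by (simp add: rev_nth)
    also have "\<dots> \<longleftrightarrow> (\<forall>j. ?n - Suc i < j \<and> j < ?n \<longrightarrow> s ! j > s ! (?n - Suc i))"
    proof (intro iffI allI impI)
      fix j assume "\<forall>j<i. s ! (?n - Suc j) > s ! (?n - Suc i)" "?n - Suc i < j \<and> j < ?n"
      moreover have "?n - Suc j < i" "?n - Suc (?n - Suc j) = j"
        using that \<open>?n - Suc i < j \<and> j < ?n\<close> by auto
      ultimately show "s ! j > s ! (?n - Suc i)"
        by metis
    next
      fix j assume "\<forall>j. ?n - Suc i < j \<and> j < ?n \<longrightarrow> s ! j > s ! (?n - Suc i)" "j < i"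
      moreover have "?n - Suc i < ?n - Suc j" "?n - Suc j < ?n"
        using that \<open>j < i\<close> by auto
      ultimately show "s ! (?n - Suc j) > s ! (?n - Suc i)"
        by blast
    qed
    finally show ?thesis .
  qed
  then have "LRmin (rev s) =
             card {i. i < ?n \<and> (\<lambda>k. \<forall>j. k < j \<and> j < ?n \<longrightarrow> s ! j > s ! k) (?n - Suc i)}"
    unfolding LRmin_def by (simp cong: conj_cong)
  also have "\<dots> = RLmin s"
    unfolding RLmin_def by (rule card_reflect_lessThan)
  finally show ?thesis ..
qed

lemma RLmin_append_min:
  assumes "\<forall>z\<in>set L \<union> set R. m < z"
  shows "RLmin (L @ m # R) = Suc (RLmin R)"
  using LRmin_append_min[of "rev R" "rev L" m] assms by (simp add: RLmin_eq_LRmin_rev Un_commute)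

lemma RLmin_map:
  assumes "strict_mono_on (set xs) g"
  shows "RLmin (map g xs) = RLmin xs"
  using LRmin_map[of "rev xs" g] assms by (simp add: RLmin_eq_LRmin_rev rev_map)

lemma LRmin_Nil [simp]: "LRmin [] = 0" and RLmin_Nil [simp]: "RLmin [] = 0"
  by (simp_all add: LRmin_def RLmin_def)

definition perm_sum :: "(nat list \<Rightarrow> 'a::comm_monoid_add) \<Rightarrow> nat set \<Rightarrow> 'a" where
  "perm_sum f A = (\<Sum>\<sigma>\<in>permutations_of_set A. f \<sigma>)"

definition order_invariant :: "(nat list \<Rightarrow> 'a) \<Rightarrow> bool" where
  "order_invariant f \<longleftrightarrow> (\<forall>xs g. strict_mono_on (set xs) g \<longrightarrow> f (map g xs) = f xs)"

lemma perm_sum_image_strict_mono: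
  assumes g: "strict_mono_on B g" and f: "order_invariant f"
  shows "perm_sum f (g ` B) = perm_sum f B"
proof -
  have inj: "inj_on g B"
    using g by (rule strict_mono_on_imp_inj_on)
  have "inj_on (map g) (permutations_of_set B)"
  proof (rule inj_onI)
    fix \<sigma> \<tau> assume "\<sigma> \<in> permutations_of_set B" "\<tau> \<in> permutations_of_set B" "map g \<sigma> = map g \<tau>"
    then show "\<sigma> = \<tau>"
      using inj by (metis inj_on_map_eq_map permutations_of_setD(1) sup.idem)
  qed
  then have "perm_sum f (g ` B) = (\<Sum>\<sigma>\<in>permutations_of_set B. f (map g \<sigma>))"
    by (simp add: perm_sum_def permutations_of_set_image_inj[OF inj] sum.reindex)
  also have "\<dots> = perm_sum f B"
    unfolding perm_sum_def using f g
    by (intro sum.cong) (auto simp: order_invariant_def permutations_of_set_def)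
  finally show ?thesis .
qed

lemma perm_sum_relabel:
  assumes "finite A" and "order_invariant f"
  shows "perm_sum f A = perm_sum f {0..<card A}"
proof -
  let ?xs = "sorted_list_of_set A"
  have "strict_mono_on {0..<card A} ((!) ?xs)"
    using assms(1) sorted_wrt_nth_less[OF strict_sorted_list_of_set[of A]]
    by (intro strict_mono_onI) simp
  moreover have "(!) ?xs ` {0..<card A} = A"
    using assms(1) by (simp add: nth_image)
  ultimately show ?thesis
    using perm_sum_image_strict_mono[OF _ assms(2)] by metis
qed

lemma bij_betw_split_at:
  assumes "m \<notin> A"
  shows "bij_betw (\<lambda>(B, L, R). L @ m # R)
           (SIGMA B:Pow A. permutations_of_set B \<times> permutations_of_set (A - B))
           (permutations_of_set (insert m A))"
proof (rule bij_betw_imageI)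
  show "inj_on (\<lambda>(B, L, R). L @ m # R)
          (SIGMA B:Pow A. permutations_of_set B \<times> permutations_of_set (A - B))"
  proof (rule inj_onI, clarsimp)
    fix B L R B' L' R'
    assume "L \<in> permutations_of_set B" "R \<in> permutations_of_set (A - B)" "B \<subseteq> A"
      "L' \<in> permutations_of_set B'" "R' \<in> permutations_of_set (A - B')" "B' \<subseteq> A"
      "L @ m # R = L' @ m # R'"
    moreover from this have "m \<notin> set L" "m \<notin> set R"
      using assms by (auto simp: permutations_of_set_def)
    ultimately show "B = B' \<and> L = L' \<and> R = R'"
      by (metis append_Cons_eq_iff permutations_of_setD(1))
  qed
  show "(\<lambda>(B, L, R). L @ m # R) ` (SIGMA B:Pow A. permutations_of_set B \<times> permutations_of_set (A - B))
        = permutations_of_set (insert m A)"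
  proof (intro set_eqI iffI)
    fix \<sigma> assume "\<sigma> \<in> permutations_of_set (insert m A)"
    then have \<sigma>: "set \<sigma> = insert m A" "distinct \<sigma>"
      by (auto simp: permutations_of_set_def)
    then obtain L R where "\<sigma> = L @ m # R"
      by (metis insertI1 split_list)
    moreover have "(set L, L, R) \<in> (SIGMA B:Pow A. permutations_of_set B \<times> permutations_of_set (A - B))"
      using \<sigma> assms \<open>\<sigma> = L @ m # R\<close> by (auto simp: permutations_of_set_def)
    ultimately show "\<sigma> \<in> (\<lambda>(B, L, R). L @ m # R) `
                       (SIGMA B:Pow A. permutations_of_set B \<times> permutations_of_set (A - B))"
      by (intro rev_image_eqI[of "(set L, L, R)"]) auto
  next
    fix \<sigma> assume "\<sigma> \<in> (\<lambda>(B, L, R). L @ m # R) `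
                       (SIGMA B:Pow A. permutations_of_set B \<times> permutations_of_set (A - B))"
    then obtain B L R where "B \<subseteq> A" "L \<in> permutations_of_set B" "R \<in> permutations_of_set (A - B)"
      and "\<sigma> = L @ m # R"
      by auto
    then show "\<sigma> \<in> permutations_of_set (insert m A)"
      using assms by (auto simp: permutations_of_set_def)
  qed
qed

lemma perm_sum_insert:
  fixes f g h :: "nat list \<Rightarrow> 'a::comm_semiring_1"
  assumes "finite A" "m \<notin> A"
    and split: "\<And>L R. set L \<union> set R = A \<Longrightarrow> distinct (L @ R) \<Longrightarrow>
                  f (L @ m # R) = c (length L) * g L * h R"
  shows "perm_sum f (insert m A) = (\<Sum>B\<in>Pow A. c (card B) * perm_sum g B * perm_sum h (A - B))"
proof -
  have "perm_sum f (insert m A) =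
        (\<Sum>B\<in>Pow A. \<Sum>(L, R)\<in>permutations_of_set B \<times> permutations_of_set (A - B). f (L @ m # R))"
    unfolding perm_sum_def sum.reindex_bij_betw[OF bij_betw_split_at[OF assms(2)], symmetric]
    using assms(1) by (subst sum.Sigma) (auto simp: case_prod_beta)
  also have "\<dots> = (\<Sum>B\<in>Pow A. \<Sum>(L, R)\<in>permutations_of_set B \<times> permutations_of_set (A - B).
                      c (card B) * (g L * h R))"
  proof (intro sum.cong refl, clarsimp)
    fix B L R assume "B \<subseteq> A" "L \<in> permutations_of_set B" "R \<in> permutations_of_set (A - B)"
    moreover from this have "length L = card B"
      by (simp add: length_finite_permutations_of_set)
    ultimately show "f (L @ m # R) = c (card B) * (g L * h R)"
      using split[of L R] by (auto simp: permutations_of_set_def mult.assoc)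
  qed
  also have "\<dots> = (\<Sum>B\<in>Pow A. c (card B) * perm_sum g B * perm_sum h (A - B))"
  proof (intro sum.cong refl)
    fix B
    have "(\<Sum>(L, R)\<in>permutations_of_set B \<times> permutations_of_set (A - B). g L * h R) =
          perm_sum g B * perm_sum h (A - B)"
      by (simp add: perm_sum_def sum_product sum.cartesian_product)
    then show "(\<Sum>(L, R)\<in>permutations_of_set B \<times> permutations_of_set (A - B). c (card B) * (g L * h R)) =
               c (card B) * perm_sum g B * perm_sum h (A - B)"
      by (simp add: sum_distrib_left[symmetric] case_prod_beta mult.assoc)
  qed
  finally show ?thesis .
qed

lemma sum_Pow_card:
  fixes F :: "nat \<Rightarrow> 'a::comm_semiring_1"
  assumes "finite A"
  shows "(\<Sum>B\<in>Pow A. F (card B)) = (\<Sum>k\<le>card A. of_nat (card A choose k) * F k)"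
proof -
  have "(\<Sum>B\<in>Pow A. F (card B)) = (\<Sum>k\<le>card A. \<Sum>B\<in>{B \<in> Pow A. card B = k}. F (card B))"
    using assms by (intro sum.group[symmetric]) (auto intro: card_mono)
  also have "\<dots> = (\<Sum>k\<le>card A. \<Sum>B\<in>{B. B \<subseteq> A \<and> card B = k}. F k)"
    by (intro sum.cong) auto
  also have "\<dots> = (\<Sum>k\<le>card A. of_nat (card A choose k) * F k)"
    using assms by (simp add: n_subsets)
  finally show ?thesis .
qed

lemma perm_sum_split_at_0:
  fixes f g h :: "nat list \<Rightarrow> 'a::comm_semiring_1"
  assumes "order_invariant g" "order_invariant h"
    and split: "\<And>L R. \<forall>z\<in>set L \<union> set R. 0 < z \<Longrightarrow>
                  f (L @ 0 # R) = c (length L) (length R) * g L * h R"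
  shows "perm_sum f {0..<Suc n} =
         (\<Sum>k\<le>n. of_nat (n choose k) * (c k (n - k) * perm_sum g {0..<k} * perm_sum h {0..<n - k}))"
proof -
  have "perm_sum f {0..<Suc n} = perm_sum f (insert 0 {1..n})"
    by (rule arg_cong[where f = "perm_sum f"]) auto
  also have "\<dots> =
        (\<Sum>B\<in>Pow {1..n}. c (card B) (n - card B) * perm_sum g B * perm_sum h ({1..n} - B))"
  proof (rule perm_sum_insert)
    fix L R assume "set L \<union> set R = {1..n}" "distinct (L @ R)"
    moreover from this have "length R = n - length L"
      using distinct_card[of "L @ R"] by simp
    ultimately show "f (L @ 0 # R) = (\<lambda>k. c k (n - k)) (length L) * g L * h R"
      using split[of L R] by simp
  qed auto
  also have "\<dots> = (\<Sum>B\<in>Pow {1..n}. c (card B) (n - card B) * perm_sum g {0..<card B} * perm_sum h {0..<n - card B})"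
  proof (intro sum.cong refl)
    fix B assume "B \<in> Pow {1..n}"
    then have "finite B" "card ({1..n} - B) = n - card B"
      by (auto intro: finite_subset simp: card_Diff_subset finite_subset)
    then show "c (card B) (n - card B) * perm_sum g B * perm_sum h ({1..n} - B) =
               c (card B) (n - card B) * perm_sum g {0..<card B} * perm_sum h {0..<n - card B}"
      using perm_sum_relabel assms(1,2) by (metis finite_Diff finite_atLeastAtMost)
  qed
  also have "\<dots> = (\<Sum>k\<le>n. of_nat (n choose k) * (c k (n - k) * perm_sum g {0..<k} * perm_sum h {0..<n - k}))"
    using sum_Pow_card[of "{1..n}" "\<lambda>k. c k (n - k) * perm_sum g {0..<k} * perm_sum h {0..<n - k}"]
    by simp
  finally show ?thesis .
qed

text \<open>
  Cutting at the minimum \<open>m\<close> leaves a left segment whose first letter never counts and whose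
  last letter has \<open>m\<close> to its right (flags \<open>False False\<close>), and a right segment with
  \<open>m\<close> to its left and the sentinel \<open>+\<infinity>\<close> to its right (\<open>True True\<close>). Cutting a
  segment at its own minimum reproduces a segment of the same kind and a block flanked by
  smaller letters (\<open>True False\<close>).
\<close>

definition block_weight :: "'a::comm_semiring_1 \<Rightarrow> nat list \<Rightarrow> 'a" where
  "block_weight u L = u ^ double_ascents True False L"

definition left_weight :: "'a::comm_semiring_1 \<Rightarrow> 'a \<Rightarrow> nat list \<Rightarrow> 'a" where
  "left_weight u a L = u ^ double_ascents False False L * a ^ LRmin L"

definition right_weight :: "'a::comm_semiring_1 \<Rightarrow> 'a \<Rightarrow> nat list \<Rightarrow> 'a" where
  "right_weight u b L = u ^ double_ascents True True L * b ^ RLmin L"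

lemma order_invariant_block_weight: "order_invariant (block_weight u)"
  and order_invariant_left_weight: "order_invariant (left_weight u a)"
  and order_invariant_right_weight: "order_invariant (right_weight u b)"
  by (simp_all add: order_invariant_def block_weight_def left_weight_def right_weight_def
      double_ascents_map LRmin_map RLmin_map)

lemma perm_sum_block_weight_Suc:
  "perm_sum (block_weight u) {0..<Suc n} =
   (\<Sum>k\<le>n. of_nat (n choose k) * ((if k = 0 \<and> n \<noteq> 0 then u else 1) *
      perm_sum (block_weight u) {0..<k} * perm_sum (block_weight u) {0..<n - k}))"
proof -
  have "perm_sum (block_weight u) {0..<Suc n} =
        (\<Sum>k\<le>n. of_nat (n choose k) * ((if k = 0 \<and> n - k \<noteq> 0 then u else 1) *
           perm_sum (block_weight u) {0..<k} * perm_sum (block_weight u) {0..<n - k}))"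
  proof (rule perm_sum_split_at_0[OF order_invariant_block_weight order_invariant_block_weight])
    fix L R :: "nat list" assume "\<forall>z\<in>set L \<union> set R. 0 < z"
    then show "block_weight u (L @ 0 # R) =
               (\<lambda>k j. if k = 0 \<and> j \<noteq> 0 then u else 1) (length L) (length R) *
               block_weight u L * block_weight u R"
      using double_ascents_append_min[of L R 0 True False]
      by (cases "L = []") (simp_all add: block_weight_def power_add mult_ac)
  qed
  then show ?thesis
    by (auto intro!: sum.cong)
qed

lemma perm_sum_left_weight_Suc:
  "perm_sum (left_weight u a) {0..<Suc n} =
   (\<Sum>k\<le>n. of_nat (n choose k) * (a * perm_sum (left_weight u a) {0..<k} * perm_sum (block_weight u) {0..<n - k}))"
proof (rule perm_sum_split_at_0[OF order_invariant_left_weight order_invariant_block_weight])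
  fix L R :: "nat list" assume "\<forall>z\<in>set L \<union> set R. 0 < z"
  then show "left_weight u a (L @ 0 # R) = (\<lambda>_ _. a) (length L) (length R) * left_weight u a L * block_weight u R"
    using double_ascents_append_min[of L R 0 False False] LRmin_append_min[of L R 0]
    by (simp add: left_weight_def block_weight_def power_add mult_ac)
qed

lemma perm_sum_right_weight_Suc:
  "perm_sum (right_weight u b) {0..<Suc n} =
   (\<Sum>k\<le>n. of_nat (n choose k) * (b * (if k = 0 then u else 1) *
      perm_sum (block_weight u) {0..<k} * perm_sum (right_weight u b) {0..<n - k}))"
proof (rule perm_sum_split_at_0[OF order_invariant_block_weight order_invariant_right_weight])
  fix L R :: "nat list" assume "\<forall>z\<in>set L \<union> set R. 0 < z"
  then show "right_weight u b (L @ 0 # R) =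
             (\<lambda>k _. b * (if k = 0 then u else 1)) (length L) (length R) * block_weight u L * right_weight u b R"
    using double_ascents_append_min[of L R 0 True True] RLmin_append_min[of L R 0]
    by (cases "L = []") (simp_all add: right_weight_def block_weight_def power_add mult_ac)
qed

definition rda_weight :: "'a::comm_semiring_1 \<Rightarrow> 'a \<Rightarrow> 'a \<Rightarrow> nat list \<Rightarrow> 'a" where
  "rda_weight u a b \<sigma> = u ^ rda \<sigma> * a ^ (LRmin \<sigma> - 1) * b ^ (RLmin \<sigma> - 1)"

lemma perm_sum_rda_weight:
  "perm_sum (rda_weight u a b) {1..n+1} =
   (\<Sum>k\<le>n. of_nat (n choose k) * (perm_sum (left_weight u a) {0..<k} * perm_sum (right_weight u b) {0..<n - k}))"
proof -
  have "order_invariant (rda_weight u a b)"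
    by (simp add: order_invariant_def rda_weight_def rda_eq_double_ascents
        double_ascents_map LRmin_map RLmin_map)
  then have "perm_sum (rda_weight u a b) {1..n+1} = perm_sum (rda_weight u a b) {0..<Suc n}"
    using perm_sum_relabel[OF finite_atLeastAtMost, of _ 1 "n + 1"] by simp
  also have "\<dots> = (\<Sum>k\<le>n. of_nat (n choose k) *
      (1 * perm_sum (left_weight u a) {0..<k} * perm_sum (right_weight u b) {0..<n - k}))"
  proof (rule perm_sum_split_at_0[OF order_invariant_left_weight order_invariant_right_weight])
    fix L R :: "nat list" assume "\<forall>z\<in>set L \<union> set R. 0 < z"
    then show "rda_weight u a b (L @ 0 # R) =
               (\<lambda>_ _. 1) (length L) (length R) * left_weight u a L * right_weight u b R"
      using double_ascents_append_min[of L R 0 False True] LRmin_append_min[of L R 0]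
        RLmin_append_min[of L R 0]
      by (simp add: rda_weight_def left_weight_def right_weight_def rda_eq_double_ascents power_add mult_ac)
  qed
  finally show ?thesis
    by simp
qed

definition egf :: "(nat \<Rightarrow> 'a::field_char_0) \<Rightarrow> 'a fps" where
  "egf x = Abs_fps (\<lambda>n. x n / fact n)"

lemma egf_nth_0 [simp]: "fps_nth (egf x) 0 = x 0"
  by (simp add: egf_def)

lemma egf_binomial_convolution:
  "egf (\<lambda>n. \<Sum>k\<le>n. of_nat (n choose k) * (x k * y (n - k))) = egf x * egf y"
proof (rule fps_ext)
  fix n
  have "fps_nth (egf x * egf y) n = (\<Sum>k\<le>n. x k / fact k * (y (n - k) / fact (n - k)))"
    by (simp add: egf_def fps_mult_nth atLeast0AtMost)
  also have "\<dots> = (\<Sum>k\<le>n. of_nat (n choose k) * (x k * y (n - k))) / fact n"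
    unfolding sum_divide_distrib by (rule sum.cong) (auto simp: binomial_fact field_simps)
  finally show "fps_nth (egf (\<lambda>n. \<Sum>k\<le>n. of_nat (n choose k) * (x k * y (n - k)))) n = fps_nth (egf x * egf y) n"
    by (simp add: egf_def)
qed

lemma fps_deriv_egf: "fps_deriv (egf x) = egf (\<lambda>n. x (Suc n))"
proof (rule fps_ext)
  fix n
  have "of_nat (Suc n) * (x (Suc n) / fact (Suc n)) = x (Suc n) / fact n"
    by (simp add: fact_Suc del: of_nat_Suc)
  then show "fps_nth (fps_deriv (egf x)) n = fps_nth (egf (\<lambda>n. x (Suc n))) n"
    by (simp add: egf_def)
qed

lemma egf_add: "egf (\<lambda>n. x n + y n) = egf x + egf y"
  by (rule fps_ext) (simp add: egf_def add_divide_distrib)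

lemma egf_scale: "egf (\<lambda>n. c * x n) = fps_const c * egf x"
  by (rule fps_ext) (simp add: egf_def)

lemma fps_linear_ode_zero:
  fixes X K :: "'a::field_char_0 fps"
  assumes ode: "fps_deriv X = X * K" and "fps_nth X 0 = 0"
  shows "X = 0"
proof -
  have "\<forall>m\<le>n. fps_nth X m = 0" for n
  proof (induction n)
    case 0
    then show ?case using \<open>fps_nth X 0 = 0\<close> by simp
  next
    case (Suc n)
    have "of_nat (Suc n) * fps_nth X (Suc n) = fps_nth (X * K) n"
      using arg_cong[OF ode, of "\<lambda>F. fps_nth F n"] by simp
    also have "\<dots> = 0"
      using Suc.IH by (simp add: fps_mult_nth)
    finally have "fps_nth X (Suc n) = 0"
      by (simp del: of_nat_Suc)
    with Suc.IH show ?case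
      by (auto simp: le_Suc_eq)
  qed
  then show ?thesis
    by (intro fps_ext) auto
qed

lemma fps_linear_ode_unique:
  fixes X Y K :: "'a::field_char_0 fps"
  assumes "fps_deriv X = X * K" "fps_deriv Y = Y * K" "fps_nth X 0 = fps_nth Y 0"
  shows "X = Y"
  using fps_linear_ode_zero[of "X - Y" K] assms by (simp add: algebra_simps)

lemma fps_riccati_unique:
  fixes X Y a b :: "'a::field_char_0 fps"
  assumes "fps_deriv X = X * X + a * X + b" "fps_deriv Y = Y * Y + a * Y + b" "fps_nth X 0 = fps_nth Y 0"
  shows "X = Y"
  using fps_linear_ode_zero[of "X - Y" "X + Y + a"] assms by (simp add: algebra_simps)

definition perm_egf :: "(nat list \<Rightarrow> 'a::field_char_0) \<Rightarrow> 'a fps" where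
  "perm_egf f = egf (\<lambda>n. perm_sum f {0..<n})"

lemma perm_egf_nth_0 [simp]: "fps_nth (perm_egf f) 0 = f []"
  by (simp add: perm_egf_def perm_sum_def)

lemma block_weight_Nil [simp]: "block_weight u [] = 1"
  and left_weight_Nil [simp]: "left_weight u a [] = 1"
  and right_weight_Nil [simp]: "right_weight u b [] = 1"
  by (simp_all add: block_weight_def left_weight_def right_weight_def)

lemma fps_deriv_block_egf:
  fixes u :: "'a::field_char_0"
  defines "S \<equiv> perm_egf (block_weight u)"
  shows "fps_deriv S = S * S + fps_const (u - 1) * S + fps_const (1 - u)"
proof -
  let ?s = "\<lambda>n. perm_sum (block_weight u) {0..<n}"
  have s0: "perm_sum (block_weight u) {} = 1"
    by (simp add: perm_sum_def)
  have "?s (Suc n) = (\<Sum>k\<le>n. of_nat (n choose k) * (?s k * ?s (n - k)) +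
                                  (if k = 0 \<and> n \<noteq> 0 then (u - 1) * ?s n else 0))" for n
    unfolding perm_sum_block_weight_Suc by (rule sum.cong) (auto simp: s0 algebra_simps)
  then have "?s (Suc n) = (\<Sum>k\<le>n. of_nat (n choose k) * (?s k * ?s (n - k))) +
                          (if n = 0 then 0 else (u - 1) * ?s n)" for n
    by (simp add: sum.distrib)
  then have "fps_deriv S = egf (\<lambda>n. \<Sum>k\<le>n. of_nat (n choose k) * (?s k * ?s (n - k))) +
                           egf (\<lambda>n. if n = 0 then 0 else (u - 1) * ?s n)"
    unfolding S_def perm_egf_def fps_deriv_egf egf_add[symmetric] by simp
  also have "egf (\<lambda>n. if n = 0 then 0 else (u - 1) * ?s n) = fps_const (u - 1) * S + fps_const (1 - u)"
    by (simp add: S_def perm_egf_def egf_def fps_eq_iff s0 algebra_simps)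
  finally show ?thesis
    by (simp add: egf_binomial_convolution[of ?s ?s] S_def perm_egf_def add.assoc)
qed

lemma fps_deriv_left_egf:
  "fps_deriv (perm_egf (left_weight u a)) =
   fps_const a * perm_egf (left_weight u a) * perm_egf (block_weight u)"
  by (simp add: perm_egf_def fps_deriv_egf perm_sum_left_weight_Suc sum_distrib_left mult.assoc
      flip: egf_binomial_convolution egf_scale)

lemma fps_deriv_right_egf:
  fixes u b :: "'a::field_char_0"
  shows "fps_deriv (perm_egf (right_weight u b)) =
         fps_const b * (perm_egf (block_weight u) + fps_const (u - 1)) * perm_egf (right_weight u b)"
proof -
  let ?s = "\<lambda>k. (if k = 0 then u else 1) * perm_sum (block_weight u) {0..<k}"
  let ?q = "\<lambda>n. perm_sum (right_weight u b) {0..<n}"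
  have "?q (Suc n) = b * (\<Sum>k\<le>n. of_nat (n choose k) * (?s k * ?q (n - k)))" for n
    unfolding perm_sum_right_weight_Suc sum_distrib_left by (rule sum.cong) (simp_all add: mult_ac)
  then have "fps_deriv (perm_egf (right_weight u b)) = fps_const b * (egf ?s * perm_egf (right_weight u b))"
    unfolding perm_egf_def fps_deriv_egf egf_scale[symmetric] egf_binomial_convolution[symmetric]
    by simp
  also have "egf ?s = perm_egf (block_weight u) + fps_const (u - 1)"
    by (simp add: perm_egf_def egf_def fps_eq_iff perm_sum_def)
  finally show ?thesis
    by (simp add: mult.assoc)
qed

lemma egf_rda_weight:
  "egf (\<lambda>n. perm_sum (rda_weight u a b) {1..n+1}) = perm_egf (left_weight u a) * perm_egf (right_weight u b)"
  unfolding perm_sum_rda_weight by (simp add: perm_egf_def flip: egf_binomial_convolution)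

lemma fps_deriv_cosh_half:
  fixes W :: "'a::field_char_0"
  shows "fps_deriv (cosh_half W) = fps_const (W / 2) * sinh_half_div W"
proof (rule fps_ext)
  fix n
  show "fps_nth (fps_deriv (cosh_half W)) n = fps_nth (fps_const (W / 2) * sinh_half_div W) n"
  proof (cases "even n")
    case False
    then have "n = Suc (2 * (n div 2))"
      by simp
    then show ?thesis
      by (simp add: cosh_half_def sinh_half_div_def del: of_nat_Suc)
  qed (simp add: cosh_half_def sinh_half_div_def)
qed

lemma fps_deriv_sinh_half_div:
  fixes W :: "'a::field_char_0"
  shows "fps_deriv (sinh_half_div W) = fps_const (1 / 2) * cosh_half W"
proof (rule fps_ext)
  fix n
  show "fps_nth (fps_deriv (sinh_half_div W)) n = fps_nth (fps_const (1 / 2) * cosh_half W) n"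
  proof (cases "even n")
    case True
    then have "n = 2 * (n div 2)"
      by simp
    then show ?thesis
      by (simp add: cosh_half_def sinh_half_div_def del: of_nat_Suc)
  qed (simp add: cosh_half_def sinh_half_div_def)
qed

lemma fps_powr_nth_0 [simp]: "fps_nth (fps_powr G c) 0 = 1"
  by (simp add: fps_powr_def)

lemma fps_deriv_fps_powr:
  fixes G :: "'a::field_char_0 fps"
  assumes G0: "fps_nth G 0 = 1"
  shows "fps_deriv (fps_powr G c) = fps_powr G c * (fps_const c * fps_deriv G * inverse G)"
proof -
  let ?H = "G - 1"
  have H0: "fps_nth ?H 0 = 0"
    using G0 by simp
  have "inverse (1 + fps_X) oo ?H = inverse ((1 + fps_X) oo ?H)"
    using H0 by (intro fps_inverse_compose) simp_all
  also have "(1 + fps_X) oo ?H = G"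
    using H0 by (simp add: fps_compose_add_distrib)
  finally have "fps_deriv (fps_ln 1 oo ?H) = inverse G * fps_deriv G"
    using H0 by (simp add: fps_compose_deriv fps_ln_deriv)
  moreover have "fps_nth (fps_const c * (fps_ln 1 oo ?H)) 0 = 0"
    by (simp add: fps_compose_nth fps_ln_nth)
  ultimately show ?thesis
    by (simp add: fps_powr_def fps_compose_deriv mult_ac)
qed

text \<open>
  \<open>rda_denom u\<close> is the reciprocal \<open>(w cosh (w t / 2) - (1 + u) sinh (w t / 2)) / w\<close> of the
  bracketed base.
\<close>

definition rda_denom :: "'a::field_char_0 \<Rightarrow> 'a fps" where
  "rda_denom u = cosh_half ((u + 1)^2 - 4) - fps_const (1 + u) * sinh_half_div ((u + 1)^2 - 4)"

lemma rda_denom_nth_0 [simp]: "fps_nth (rda_denom u) 0 = 1"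
  by (simp add: rda_denom_def cosh_half_def sinh_half_div_def)

lemma rda_denom_nth_1: "fps_nth (rda_denom u) 1 = - (1 + u) / 2"
  by (simp add: rda_denom_def cosh_half_def sinh_half_div_def field_simps)

lemma fps_deriv2_rda_denom:
  "fps_deriv (fps_deriv (rda_denom u)) = fps_const (((u + 1)^2 - 4) / 4) * rda_denom u"
proof -
  define W where "W = (u + 1)^2 - 4"
  have "rda_denom u = cosh_half W - fps_const (1 + u) * sinh_half_div W"
    by (simp add: rda_denom_def W_def)
  moreover have "fps_deriv (fps_deriv (cosh_half W - fps_const (1 + u) * sinh_half_div W)) =
                 fps_const (W / 4) * (cosh_half W - fps_const (1 + u) * sinh_half_div W)"
    by (intro fps_ext) (simp add: fps_deriv_cosh_half fps_deriv_sinh_half_div field_simps)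
  ultimately have "fps_deriv (fps_deriv (rda_denom u)) = fps_const (W / 4) * rda_denom u"
    by simp
  then show ?thesis
    by (simp add: W_def)
qed

text \<open>
  The logarithmic derivative \<open>S = - D' / D - (u - 1) / 2\<close> turns the Riccati equation of
  \<open>S\<close> into the linear equation \<open>D'' = ((u - 1)\<^sup>2 / 4 + u - 1) D\<close>.
\<close>

lemma block_egf_eq:
  fixes u :: "'a::field_char_0"
  defines "D \<equiv> rda_denom u"
  shows "perm_egf (block_weight u) = - (fps_deriv D + fps_const ((u - 1) / 2) * D) * inverse D"
proof -
  let ?h = "fps_const ((u - 1) / 2)"
  define V where "V = - (fps_deriv D + ?h * D) * inverse D"
  have DI: "D * inverse D = 1"
    by (simp add: D_def inverse_mult_eq_1')
  have dI: "fps_deriv (inverse D) = - fps_deriv D * (inverse D * inverse D)"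
    using fps_inverse_deriv[of D] by (simp add: D_def power2_eq_square)
  have "((u + 1)^2 - 4) / 4 = (u - 1) / 2 * ((u - 1) / 2) + (u - 1)"
    by (simp add: field_simps power2_eq_square)
  then have D2: "fps_deriv (fps_deriv D) = (?h * ?h + fps_const (u - 1)) * D"
    by (simp only: D_def fps_deriv2_rda_denom fps_const_add fps_const_mult)
  have neg: "fps_const (1 - u) = - fps_const (u - 1)"
    by simp
  have riccati: "fps_deriv V = V * V + fps_const (u - 1) * V + fps_const (1 - u)"
  proof -
    have "fps_deriv V = - (fps_deriv (fps_deriv D) + ?h * fps_deriv D) * inverse D
                        + (fps_deriv D + ?h * D) * fps_deriv D * (inverse D * inverse D)"
      by (simp add: V_def dI algebra_simps)
    also have "\<dots> = V * V + (?h + ?h) * V + fps_const (1 - u)"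
      using DI D2 V_def neg by algebra
    also have "?h + ?h = fps_const (u - 1)"
      unfolding fps_const_add by (rule arg_cong[where f = fps_const]) (simp add: field_simps)
    finally show ?thesis .
  qed
  have "fps_nth V 0 = - (fps_nth D 1 + (u - 1) / 2)"
    by (simp add: V_def D_def)
  also have "\<dots> = 1"
    using rda_denom_nth_1[of u] by (simp add: D_def field_simps)
  finally have "perm_egf (block_weight u) = V"
    by (intro fps_riccati_unique[OF fps_deriv_block_egf riccati]) simp
  then show ?thesis
    unfolding V_def .
qed

lemma fps_deriv_left_right_egf:
  fixes u a b :: "'a::field_char_0"
  defines "S \<equiv> perm_egf (block_weight u)"
  defines "F \<equiv> perm_egf (left_weight u a) * perm_egf (right_weight u b)"
  shows "fps_deriv F = F * (fps_const a * S + fps_const b * (S + fps_const (u - 1)))"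
  by (simp add: F_def S_def fps_deriv_left_egf fps_deriv_right_egf algebra_simps)

lemma fps_deriv_rda_closed_form:
  fixes u a b :: "'a::field_char_0"
  defines "S \<equiv> perm_egf (block_weight u)"
  defines "F \<equiv> fps_exp ((b - a) * (u - 1) / 2) * fps_powr (inverse (rda_denom u)) (a + b)"
  shows "fps_deriv F = F * (fps_const a * S + fps_const b * (S + fps_const (u - 1)))"
proof -
  let ?D = "rda_denom u"
  have "fps_deriv (inverse ?D) * inverse (inverse ?D) = - fps_deriv ?D * inverse ?D"
    by (simp add: fps_inverse_deriv power2_eq_square inverse_mult_eq_1)
  also have "\<dots> = S + fps_const ((u - 1) / 2)"
    by (simp add: S_def block_egf_eq algebra_simps inverse_mult_eq_1')
  finally have dP: "fps_deriv (fps_powr (inverse ?D) (a + b)) =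
                fps_powr (inverse ?D) (a + b) * (fps_const (a + b) * (S + fps_const ((u - 1) / 2)))"
    by (simp add: fps_deriv_fps_powr mult.assoc)
  define c where "c = (b - a) * (u - 1) / 2"
  have "fps_deriv F = F * (fps_const c + fps_const (a + b) * (S + fps_const ((u - 1) / 2)))"
    unfolding F_def c_def[symmetric] by (simp add: dP algebra_simps)
  also have "fps_const c + fps_const (a + b) * (S + fps_const ((u - 1) / 2)) =
             fps_const a * S + fps_const b * (S + fps_const (u - 1))"
    by (intro fps_ext) (simp add: c_def field_simps)
  finally show ?thesis .
qed

theorem theorem4p6:
  fixes u \<alpha> \<beta> :: complex
  shows "Abs_fps (\<lambda>n. (\<Sum>\<sigma>\<in>permutations_of_set {1..n+1}.
            u ^ rda \<sigma> * \<alpha> ^ (LRmin \<sigma> - 1) * \<beta> ^ (RLmin \<sigma> - 1)) / fact n)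
       = fps_exp ((\<beta> - \<alpha>) * (u - 1) / 2) *
         fps_powr (inverse (cosh_half ((u + 1)^2 - 4) - fps_const (1 + u) * sinh_half_div ((u + 1)^2 - 4)))
                  (\<alpha> + \<beta>)"
proof -
  have "Abs_fps (\<lambda>n. (\<Sum>\<sigma>\<in>permutations_of_set {1..n+1}.
            u ^ rda \<sigma> * \<alpha> ^ (LRmin \<sigma> - 1) * \<beta> ^ (RLmin \<sigma> - 1)) / fact n)
        = egf (\<lambda>n. perm_sum (rda_weight u \<alpha> \<beta>) {1..n+1})"
    by (simp add: egf_def perm_sum_def rda_weight_def)
  also have "\<dots> = perm_egf (left_weight u \<alpha>) * perm_egf (right_weight u \<beta>)"
    by (rule egf_rda_weight)
  also have "\<dots> = fps_exp ((\<beta> - \<alpha>) * (u - 1) / 2) * fps_powr (inverse (rda_denom u)) (\<alpha> + \<beta>)"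
    by (rule fps_linear_ode_unique[OF fps_deriv_left_right_egf fps_deriv_rda_closed_form]) simp
  finally show ?thesis
    by (simp add: rda_denom_def)
qed

end
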